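(* Let $M$ be an rfCGS with finite state set $St_M$, let $A$ be a coalition and $s_A=(s_{a_1},\ldots,s_{a_n})$ a natural resource-bounded strategy with recall for $A$ of complexity $k=\mathrm{compl}(s_A)$, where every action has an associated cost and each agent $a$ starts with a fixed non-refillable amount of resource $res(a)=r_a\in\mathbb{N}$. Let the goal be a temporal formula of the form $\varphi\,\mathbf{U}\,\psi$. Then, to decide whether $s_A$ enforces this objective from a state $st\in St_M$, it is sufficient to consider the tree unfolding of the executions prescribed by $s_A$ up to depth $L=|St_M|\cdot 2^{2k^2}\cdot\prod_{a\in A}(r_a+1)$.
   Context: A resource-bounded fuzzy concurrent game structure (rfCGS) is a tuple $(\mathrm{Ag},\mathrm{Ap},\{\mathrm{Act}_a\}_{a\in\mathrm{Ag}},St,st_I,\ell,d,t,res,consume)$: finite nonempty sets of agents, atomic propositions and actions; finite states $St$ with initial $st_I$; weight function $\ell:St\times\mathrm{Ap}\to[0,1]$; availability $d:\mathrm{Ag}\times St\to2^{\mathrm{Act}}$ (nonempty); transition function $t(st,\vec c)$ on joint available actions; non-refillable resource budgets $res:\mathrm{Ag}\to\mathbb{N}$; action costs $consume:\mathrm{Ag}\times\mathrm{Act}\to\mathbb{N}$, each executed action of agent $a$ consuming $consume(a,\alpha)$ from its remaining resource. A natural strategy with recall for agent $a$ is an ordered list of pairs $(r,\alpha)$ where $r$ is a regular expression (concatenation, union, Kleene star) over propositional formulas over $\mathrm{Ap}$ and $\alpha$ is an action available in the last state of every history consistent with $r$; a history $h=q_0\ldots q_n$ is consistent with $r$ if some word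 $w$ in the language of $r$ has $|w|=|h|$ and $q_j\models w[j]$ for all $j$. On a history, the agent plays the action of the first rule whose regular expression the history is consistent with. Its complexity is the total size of the regular expressions; a collective strategy's complexity is the sum over its members. The strategy enforces $\varphi\mathbf{U}\psi$ from $st$ if all paths from $st$ consistent with $s_A$ (other agents acting arbitrarily, within resource constraints) satisfy $\varphi\mathbf{U}\psi$. *)

theory Defs
  imports Complex_Main
begin

record ('ag, 'ap, 'act, 's) rfcgs =
  Agt     :: "'ag set"
  Ap      :: "'ap set"
  Act     :: "'act set"
  St      :: "'s set"
  st_I    :: "'s"
  lab     :: "'s \<Rightarrow> 'ap \<Rightarrow> real"
  avail   :: "'ag \<Rightarrow> 's \<Rightarrow> 'act set"
  trans   :: "'s \<Rightarrow> ('ag \<Rightarrow> 'act) \<Rightarrow> 's"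
  res     :: "'ag \<Rightarrow> nat"
  consume :: "'ag \<Rightarrow> 'act \<Rightarrow> nat"

text \<open>Joint actions are total functions on agents; only their values on Agt matter.\<close>
definition joint_avail :: "('ag, 'ap, 'act, 's) rfcgs \<Rightarrow> 's \<Rightarrow> ('ag \<Rightarrow> 'act) \<Rightarrow> bool" where
  "joint_avail M s c \<longleftrightarrow> (\<forall>a\<in>Agt M. c a \<in> avail M a s)"

definition is_rfcgs :: "('ag, 'ap, 'act, 's) rfcgs \<Rightarrow> bool" where
  "is_rfcgs M \<longleftrightarrow>
     finite (Agt M) \<and> Agt M \<noteq> {} \<and>
     finite (Ap M) \<and> Ap M \<noteq> {} \<and>
     finite (Act M) \<and> Act M \<noteq> {} \<and>
     finite (St M) \<and> st_I M \<in> St M \<and>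
     (\<forall>s\<in>St M. \<forall>p\<in>Ap M. 0 \<le> lab M s p \<and> lab M s p \<le> 1) \<and>
     (\<forall>a\<in>Agt M. \<forall>s\<in>St M. avail M a s \<subseteq> Act M \<and> avail M a s \<noteq> {}) \<and>
     (\<forall>s\<in>St M. \<forall>c. joint_avail M s c \<longrightarrow> trans M s c \<in> St M) \<and>
     (\<forall>s\<in>St M. \<forall>c c'. (\<forall>a\<in>Agt M. c a = c' a) \<longrightarrow> trans M s c = trans M s c')"

datatype 'ap pform = PTrue | PAtom 'ap | PNot "'ap pform"
  | PAnd "'ap pform" "'ap pform" | POr "'ap pform" "'ap pform"

fun psize :: "'ap pform \<Rightarrow> nat" where
  "psize PTrue = 1"
| "psize (PAtom p) = 1"
| "psize (PNot f) = 1 + psize f"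
| "psize (PAnd f g) = 1 + psize f + psize g"
| "psize (POr f g) = 1 + psize f + psize g"

datatype 'f regex = RAtom 'f | RCat "'f regex" "'f regex"
  | RUnion "'f regex" "'f regex" | RStar "'f regex"

definition lstar :: "'a list set \<Rightarrow> 'a list set" where
  "lstar L = {concat ws | ws. set ws \<subseteq> L}"

fun lang :: "'f regex \<Rightarrow> 'f list set" where
  "lang (RAtom f) = {[f]}"
| "lang (RCat r1 r2) = {u @ v | u v. u \<in> lang r1 \<and> v \<in> lang r2}"
| "lang (RUnion r1 r2) = lang r1 \<union> lang r2"
| "lang (RStar r) = lstar (lang r)"

fun rsize :: "'ap pform regex \<Rightarrow> nat" where
  "rsize (RAtom f) = psize f"
| "rsize (RCat r1 r2) = 1 + rsize r1 + rsize r2"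
| "rsize (RUnion r1 r2) = 1 + rsize r1 + rsize r2"
| "rsize (RStar r) = 1 + rsize r"

text \<open>The parameter sat is the satisfaction relation between states and propositional formulas
  (the statement is proved for an arbitrary such relation).\<close>
definition consistent :: "('s \<Rightarrow> 'ap pform \<Rightarrow> bool) \<Rightarrow> 'ap pform regex \<Rightarrow> 's list \<Rightarrow> bool" where
  "consistent sat r h \<longleftrightarrow>
     (\<exists>w\<in>lang r. length w = length h \<and> (\<forall>j<length h. sat (h ! j) (w ! j)))"

type_synonym ('ap, 'act) nstrat = "('ap pform regex \<times> 'act) list"

fun nact :: "('s \<Rightarrow> 'ap pform \<Rightarrow> bool) \<Rightarrow> ('ap, 'act) nstrat \<Rightarrow> 's list \<Rightarrow> 'act option" where
  "nact sat [] h = None"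
| "nact sat ((r, \<alpha>) # rs) h = (if consistent sat r h then Some \<alpha> else nact sat rs h)"

definition is_nstrat ::
  "('ag, 'ap, 'act, 's) rfcgs \<Rightarrow> ('s \<Rightarrow> 'ap pform \<Rightarrow> bool) \<Rightarrow> 'ag \<Rightarrow> ('ap, 'act) nstrat \<Rightarrow> bool" where
  "is_nstrat M sat a rs \<longleftrightarrow>
     (\<forall>(r, \<alpha>) \<in> set rs. \<forall>h. h \<noteq> [] \<and> set h \<subseteq> St M \<and> consistent sat r h \<longrightarrow> \<alpha> \<in> avail M a (last h)) \<and>
     (\<forall>h. h \<noteq> [] \<and> set h \<subseteq> St M \<longrightarrow> (\<exists>(r, \<alpha>) \<in> set rs. consistent sat r h))"

definition compl :: "('ap, 'act) nstrat \<Rightarrow> nat" where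
  "compl rs = (\<Sum>(r, \<alpha>) \<leftarrow> rs. rsize r)"

definition coal_compl :: "'ag set \<Rightarrow> ('ag \<Rightarrow> ('ap, 'act) nstrat) \<Rightarrow> nat" where
  "coal_compl A sA = (\<Sum>a\<in>A. compl (sA a))"

definition outcome ::
  "('ag, 'ap, 'act, 's) rfcgs \<Rightarrow> ('s \<Rightarrow> 'ap pform \<Rightarrow> bool) \<Rightarrow> 'ag set \<Rightarrow> ('ag \<Rightarrow> ('ap, 'act) nstrat)
     \<Rightarrow> 's \<Rightarrow> (nat \<Rightarrow> 's) \<Rightarrow> (nat \<Rightarrow> 'ag \<Rightarrow> 'act) \<Rightarrow> bool" where
  "outcome M sat A sA st \<pi> c \<longleftrightarrow>
     \<pi> 0 = st \<and>
     (\<forall>i. joint_avail M (\<pi> i) (c i) \<and> \<pi> (Suc i) = trans M (\<pi> i) (c i)) \<and>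
     (\<forall>i. \<forall>a\<in>A. nact sat (sA a) (map \<pi> [0..<Suc i]) = Some (c i a)) \<and>
     (\<forall>i. \<forall>a\<in>A. (\<Sum>j\<le>i. consume M a (c j a)) \<le> res M a)"

definition until_path :: "'s set \<Rightarrow> 's set \<Rightarrow> (nat \<Rightarrow> 's) \<Rightarrow> bool" where
  "until_path Phi Psi \<pi> \<longleftrightarrow> (\<exists>i. \<pi> i \<in> Psi \<and> (\<forall>j<i. \<pi> j \<in> Phi))"

definition until_within :: "nat \<Rightarrow> 's set \<Rightarrow> 's set \<Rightarrow> (nat \<Rightarrow> 's) \<Rightarrow> bool" where
  "until_within L Phi Psi \<pi> \<longleftrightarrow> (\<exists>i\<le>L. \<pi> i \<in> Psi \<and> (\<forall>j<i. \<pi> j \<in> Phi))"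

definition enforces_until ::
  "('ag, 'ap, 'act, 's) rfcgs \<Rightarrow> ('s \<Rightarrow> 'ap pform \<Rightarrow> bool) \<Rightarrow> 'ag set \<Rightarrow> ('ag \<Rightarrow> ('ap, 'act) nstrat)
     \<Rightarrow> 's \<Rightarrow> 's set \<Rightarrow> 's set \<Rightarrow> bool" where
  "enforces_until M sat A sA st Phi Psi \<longleftrightarrow>
     (\<forall>\<pi> c. outcome M sat A sA st \<pi> c \<longrightarrow> until_path Phi Psi \<pi>)"

text \<open>Checking the tree unfolding up to depth L: every outcome satisfies the until
  objective at some position \<le> L.\<close>
definition enforces_until_depth ::
  "nat \<Rightarrow> ('ag, 'ap, 'act, 's) rfcgs \<Rightarrow> ('s \<Rightarrow> 'ap pform \<Rightarrow> bool) \<Rightarrow> 'ag set \<Rightarrow> ('ag \<Rightarrow> ('ap, 'act) nstrat)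
     \<Rightarrow> 's \<Rightarrow> 's set \<Rightarrow> 's set \<Rightarrow> bool" where
  "enforces_until_depth L M sat A sA st Phi Psi \<longleftrightarrow>
     (\<forall>\<pi> c. outcome M sat A sA st \<pi> c \<longrightarrow> until_within L Phi Psi \<pi>)"

end

(* Call the configuration after a finite history the triple consisting of its last state, the
   left quotients by the history of the languages of all guards of the coalition's strategies,
   and the resources consumed so far by each coalition member. Whether a guard matches an
   extension of the history, and whether the coalition can still pay for its actions, depends
   only on the configuration. So if two positions of an outcome carry the same configuration,
   repeating the segment between them forever yields another outcome (a lasso).

   By Antimirov's partial derivatives, every left quotient of the language of a regex r by a
   nonempty word is the union of the languages of a subset of a fixed set of at most |r|
   partial derivatives. Hence there are at most |St| * 2^k * prod (r_a + 1) configurations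
   (2^k, sharper than the 2^(2k^2) of the statement). If some outcome avoided Psi up to that
   depth, a configuration would repeat before it, and the resulting lasso would be an outcome
   that never visits Psi. *)

theory Submission
  imports Defs "HOL-Library.FuncSet"
begin

section \<open>Languages of histories\<close>

lemma Nil_in_lstar: "[] \<in> lstar L"
  unfolding lstar_def by (auto intro: exI[of _ "[]"])

lemma append_in_lstar:
  assumes "u \<in> L" and "v \<in> lstar L"
  shows "u @ v \<in> lstar L"
proof -
  obtain ws where "v = concat ws" "set ws \<subseteq> L"
    using assms(2) unfolding lstar_def by blast
  then have "u @ v = concat (u # ws)" "set (u # ws) \<subseteq> L"
    using assms(1) by auto
  then show ?thesis unfolding lstar_def by blast
qed

lemma lstar_induct [consumes 1, case_names Nil append]:
  assumes "z \<in> lstar L"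
    and "P []"
    and "\<And>u v. u \<in> L \<Longrightarrow> v \<in> lstar L \<Longrightarrow> P v \<Longrightarrow> P (u @ v)"
  shows "P z"
proof -
  obtain ws where "z = concat ws" "set ws \<subseteq> L"
    using assms(1) unfolding lstar_def by blast
  then show ?thesis
  proof (induction ws arbitrary: z)
    case (Cons w ws)
    then show ?case
      using assms(3)[of w "concat ws"] unfolding lstar_def by auto
  qed (simp add: assms(2))
qed

lemma Cons_in_conc_iff:
  "x # g \<in> {u @ v | u v. u \<in> U \<and> v \<in> V} \<longleftrightarrow>
     [] \<in> U \<and> x # g \<in> V \<or> (\<exists>u v. x # u \<in> U \<and> v \<in> V \<and> g = u @ v)"
  by (auto simp: Cons_eq_append_conv)

lemma Cons_in_lstar_iff:
  "x # g \<in> lstar L \<longleftrightarrow> (\<exists>u v. x # u \<in> L \<and> v \<in> lstar L \<and> g = u @ v)"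
proof
  assume "x # g \<in> lstar L"
  then show "\<exists>u v. x # u \<in> L \<and> v \<in> lstar L \<and> g = u @ v"
    by (induction "x # g" arbitrary: g rule: lstar_induct) (auto simp: append_eq_Cons_conv)
qed (metis append_Cons append_in_lstar)

lemma lstar_list_all2:
  "{h. \<exists>w\<in>lstar W. list_all2 P w h} = lstar {h. \<exists>w\<in>W. list_all2 P w h}"
proof (intro set_eqI iffI)
  fix h
  assume "h \<in> {h. \<exists>w\<in>lstar W. list_all2 P w h}"
  then obtain w where "w \<in> lstar W" "list_all2 P w h" by blast
  then show "h \<in> lstar {h. \<exists>w\<in>W. list_all2 P w h}"
    by (induction w arbitrary: h rule: lstar_induct)
      (auto simp: list_all2_append1 intro!: Nil_in_lstar append_in_lstar)
next
  fix h
  assume "h \<in> lstar {h. \<exists>w\<in>W. list_all2 P w h}"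
  then show "h \<in> {h. \<exists>w\<in>lstar W. list_all2 P w h}"
    by (induction h rule: lstar_induct)
      (auto intro: Nil_in_lstar append_in_lstar list_all2_appendI)
qed

fun hist_lang :: "('s \<Rightarrow> 'f \<Rightarrow> bool) \<Rightarrow> 'f regex \<Rightarrow> 's list set" where
  "hist_lang sat (RAtom f) = {[x] | x. sat x f}"
| "hist_lang sat (RCat r1 r2) = {u @ v | u v. u \<in> hist_lang sat r1 \<and> v \<in> hist_lang sat r2}"
| "hist_lang sat (RUnion r1 r2) = hist_lang sat r1 \<union> hist_lang sat r2"
| "hist_lang sat (RStar r) = lstar (hist_lang sat r)"

lemma hist_lang_eq_list_all2: "hist_lang sat r = {h. \<exists>w\<in>lang r. list_all2 (\<lambda>f x. sat x f) w h}"
proof (induction r)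
  case (RAtom f)
  then show ?case by (auto simp: list_all2_Cons1)
next
  case (RCat r1 r2)
  show ?case
  proof (intro set_eqI iffI)
    fix h
    assume "h \<in> hist_lang sat (RCat r1 r2)"
    then obtain u v w1 w2 where "h = u @ v" "w1 \<in> lang r1" "w2 \<in> lang r2"
      "list_all2 (\<lambda>f x. sat x f) w1 u" "list_all2 (\<lambda>f x. sat x f) w2 v"
      using RCat.IH by auto
    then show "h \<in> {h. \<exists>w\<in>lang (RCat r1 r2). list_all2 (\<lambda>f x. sat x f) w h}"
      by (auto intro: list_all2_appendI)
  next
    fix h
    assume "h \<in> {h. \<exists>w\<in>lang (RCat r1 r2). list_all2 (\<lambda>f x. sat x f) w h}"
    then obtain w1 w2 where "w1 \<in> lang r1" "w2 \<in> lang r2"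
      "list_all2 (\<lambda>f x. sat x f) (w1 @ w2) h"
      by auto
    then show "h \<in> hist_lang sat (RCat r1 r2)"
      using RCat.IH by (auto simp: list_all2_append1)
  qed
next
  case (RStar r)
  then show ?case by (simp add: lstar_list_all2)
qed auto

lemma consistent_iff_in_hist_lang: "consistent sat r h \<longleftrightarrow> h \<in> hist_lang sat r"
  by (auto simp: consistent_def hist_lang_eq_list_all2 list_all2_conv_all_nth)

fun nullable :: "'f regex \<Rightarrow> bool" where
  "nullable (RAtom f) \<longleftrightarrow> False"
| "nullable (RCat r1 r2) \<longleftrightarrow> nullable r1 \<and> nullable r2"
| "nullable (RUnion r1 r2) \<longleftrightarrow> nullable r1 \<or> nullable r2"
| "nullable (RStar r) \<longleftrightarrow> True"

lemma Nil_in_hist_lang_iff [simp]: "[] \<in> hist_lang sat r \<longleftrightarrow> nullable r"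
  by (induction r) (auto intro: Nil_in_lstar)

fun cat_lang :: "('s \<Rightarrow> 'f \<Rightarrow> bool) \<Rightarrow> 'f regex list \<Rightarrow> 's list set" where
  "cat_lang sat [] = {[]}"
| "cat_lang sat (r # rs) = {u @ v | u v. u \<in> hist_lang sat r \<and> v \<in> cat_lang sat rs}"

lemma cat_lang_append:
  "cat_lang sat (rs @ ts) = {u @ v | u v. u \<in> cat_lang sat rs \<and> v \<in> cat_lang sat ts}"
  by (induction rs) (auto, metis append.assoc, metis append.assoc)

section \<open>Partial derivatives and left quotients\<close>

(* Antimirov's partial derivatives; a derivative is a list of regexes denoting their
   concatenation. *)
fun pderiv :: "('s \<Rightarrow> 'f \<Rightarrow> bool) \<Rightarrow> 's \<Rightarrow> 'f regex \<Rightarrow> 'f regex list set" where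
  "pderiv sat x (RAtom f) = (if sat x f then {[]} else {})"
| "pderiv sat x (RCat r1 r2) =
     (\<lambda>rs. rs @ [r2]) ` pderiv sat x r1 \<union> (if nullable r1 then pderiv sat x r2 else {})"
| "pderiv sat x (RUnion r1 r2) = pderiv sat x r1 \<union> pderiv sat x r2"
| "pderiv sat x (RStar r) = (\<lambda>rs. rs @ [RStar r]) ` pderiv sat x r"

fun pderiv_cat :: "('s \<Rightarrow> 'f \<Rightarrow> bool) \<Rightarrow> 's \<Rightarrow> 'f regex list \<Rightarrow> 'f regex list set" where
  "pderiv_cat sat x [] = {}"
| "pderiv_cat sat x (r # rs) =
     (\<lambda>ts. ts @ rs) ` pderiv sat x r \<union> (if nullable r then pderiv_cat sat x rs else {})"

lemma cat_lang_singleton [simp]: "cat_lang sat [r] = hist_lang sat r"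
  by simp

lemma Cons_in_hist_lang_iff:
  "x # g \<in> hist_lang sat r \<longleftrightarrow> (\<exists>rs\<in>pderiv sat x r. g \<in> cat_lang sat rs)"
proof (induction r arbitrary: g)
  case (RCat r1 r2)
  have "x # g \<in> hist_lang sat (RCat r1 r2) \<longleftrightarrow>
      nullable r1 \<and> (\<exists>rs\<in>pderiv sat x r2. g \<in> cat_lang sat rs) \<or>
      (\<exists>rs\<in>pderiv sat x r1. g \<in> cat_lang sat (rs @ [r2]))"
    unfolding hist_lang.simps(2) Cons_in_conc_iff RCat.IH Nil_in_hist_lang_iff
      cat_lang_append cat_lang_singleton
    by blast
  then show ?case by auto
next
  case (RStar r)
  have "x # g \<in> hist_lang sat (RStar r) \<longleftrightarrow>
      (\<exists>rs\<in>pderiv sat x r. g \<in> cat_lang sat (rs @ [RStar r]))"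
    unfolding hist_lang.simps(4) Cons_in_lstar_iff RStar.IH cat_lang_append cat_lang_singleton
    by auto
  then show ?case by auto
qed auto

lemma Cons_in_cat_lang_iff:
  "x # g \<in> cat_lang sat rs \<longleftrightarrow> (\<exists>ts\<in>pderiv_cat sat x rs. g \<in> cat_lang sat ts)"
proof (induction rs arbitrary: g)
  case (Cons r rs)
  have "x # g \<in> cat_lang sat (r # rs) \<longleftrightarrow>
      nullable r \<and> (\<exists>ts\<in>pderiv_cat sat x rs. g \<in> cat_lang sat ts) \<or>
      (\<exists>ts\<in>pderiv sat x r. g \<in> cat_lang sat (ts @ rs))"
    unfolding cat_lang.simps(2) Cons_in_conc_iff Cons.IH Nil_in_hist_lang_iff
      Cons_in_hist_lang_iff cat_lang_append
    by blast
  then show ?case by auto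
qed simp

fun pderiv_space :: "'f regex \<Rightarrow> 'f regex list set" where
  "pderiv_space (RAtom f) = {[]}"
| "pderiv_space (RCat r1 r2) = (\<lambda>rs. rs @ [r2]) ` pderiv_space r1 \<union> pderiv_space r2"
| "pderiv_space (RUnion r1 r2) = pderiv_space r1 \<union> pderiv_space r2"
| "pderiv_space (RStar r) = (\<lambda>rs. rs @ [RStar r]) ` pderiv_space r"

lemma finite_pderiv_space: "finite (pderiv_space r)"
  by (induction r) auto

lemma card_pderiv_space_le: "card (pderiv_space r) \<le> rsize r"
proof (induction r)
  case (RAtom f)
  then show ?case by (cases f) auto
next
  case (RCat r1 r2)
  have "card (pderiv_space (RCat r1 r2)) \<le> card (pderiv_space r1) + card (pderiv_space r2)"
    using card_Un_le[of "(\<lambda>rs. rs @ [r2]) ` pderiv_space r1" "pderiv_space r2"]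
      card_image_le[OF finite_pderiv_space, of "\<lambda>rs. rs @ [r2]" r1]
    by simp
  then show ?case using RCat by simp
next
  case (RUnion r1 r2)
  then show ?case using card_Un_le[of "pderiv_space r1" "pderiv_space r2"] by simp
next
  case (RStar r)
  then show ?case using card_image_le[OF finite_pderiv_space, of "\<lambda>rs. rs @ [RStar r]" r] by simp
qed

lemma pderiv_subset_pderiv_space: "pderiv sat x r \<subseteq> pderiv_space r"
  by (induction r) auto

lemma pderiv_cat_append:
  "pderiv_cat sat x (rs @ ts) =
     (\<lambda>us. us @ ts) ` pderiv_cat sat x rs \<union> (if list_all nullable rs then pderiv_cat sat x ts else {})"
  by (induction rs) (auto simp: image_Un image_image)

lemma pderiv_cat_subset_pderiv_space:
  "rs \<in> pderiv_space r \<Longrightarrow> pderiv_cat sat x rs \<subseteq> pderiv_space r"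
proof (induction r arbitrary: rs)
  case (RCat r1 r2)
  show ?case
  proof (cases "rs \<in> pderiv_space r2")
    case False
    then obtain us where "us \<in> pderiv_space r1" "rs = us @ [r2]"
      using RCat.prems by auto
    then show ?thesis
      using RCat.IH(1) pderiv_subset_pderiv_space[of sat x r2]
      by (auto simp: pderiv_cat_append)
  qed (use RCat.IH(2) in auto)
next
  case (RStar r)
  then obtain us where "us \<in> pderiv_space r" "rs = us @ [RStar r]"
    by auto
  then show ?case
    using RStar.IH pderiv_subset_pderiv_space[of sat x r]
    by (auto simp: pderiv_cat_append)
qed auto

definition lquot :: "'a list set \<Rightarrow> 'a list \<Rightarrow> 'a list set" where
  "lquot L h = {g. h @ g \<in> L}"

lemma in_lquot_snoc_iff: "g \<in> lquot L (h @ [x]) \<longleftrightarrow> x # g \<in> lquot L h"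
  by (simp add: lquot_def)

lemma Nil_in_lquot_iff: "[] \<in> lquot L h \<longleftrightarrow> h \<in> L"
  by (simp add: lquot_def)

lemma lquot_hist_lang_eq_Union:
  assumes "h \<noteq> []"
  shows "\<exists>S \<subseteq> pderiv_space r. lquot (hist_lang sat r) h = (\<Union>rs\<in>S. cat_lang sat rs)"
  using assms
proof (induction h rule: rev_induct)
  case (snoc x h)
  show ?case
  proof (cases "h = []")
    case True
    have "lquot (hist_lang sat r) [x] = (\<Union>rs\<in>pderiv sat x r. cat_lang sat rs)"
      by (intro set_eqI) (simp add: lquot_def Cons_in_hist_lang_iff)
    then show ?thesis
      using True pderiv_subset_pderiv_space by (intro exI[of _ "pderiv sat x r"]) simp
  next
    case False
    then obtain S where S: "S \<subseteq> pderiv_space r"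
      "lquot (hist_lang sat r) h = (\<Union>rs\<in>S. cat_lang sat rs)"
      using snoc.IH by blast
    have "lquot (hist_lang sat r) (h @ [x]) =
        (\<Union>rs\<in>(\<Union>ts\<in>S. pderiv_cat sat x ts). cat_lang sat rs)"
      by (rule set_eqI, unfold in_lquot_snoc_iff S(2)) (auto simp: Cons_in_cat_lang_iff)
    moreover have "(\<Union>ts\<in>S. pderiv_cat sat x ts) \<subseteq> pderiv_space r"
      using S(1) by (intro UN_least pderiv_cat_subset_pderiv_space) blast
    ultimately show ?thesis by (intro exI[of _ "\<Union>ts\<in>S. pderiv_cat sat x ts"]) simp
  qed
qed simp

lemma lquots_hist_lang_subset:
  "{lquot (hist_lang sat r) h | h. h \<noteq> []} \<subseteq> (\<lambda>S. \<Union>rs\<in>S. cat_lang sat rs) ` Pow (pderiv_space r)"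
  by (auto simp: image_iff dest!: lquot_hist_lang_eq_Union[of _ r sat])

lemma finite_lquots_hist_lang: "finite {lquot (hist_lang sat r) h | h. h \<noteq> []}"
  by (rule finite_subset[OF lquots_hist_lang_subset]) (simp add: finite_pderiv_space)

lemma card_lquots_hist_lang_le: "card {lquot (hist_lang sat r) h | h. h \<noteq> []} \<le> 2 ^ rsize r"
proof -
  have "card {lquot (hist_lang sat r) h | h. h \<noteq> []} \<le>
      card ((\<lambda>S. \<Union>rs\<in>S. cat_lang sat rs) ` Pow (pderiv_space r))"
    by (rule card_mono[OF _ lquots_hist_lang_subset]) (simp add: finite_pderiv_space)
  also have "\<dots> \<le> card (Pow (pderiv_space r))"
    by (rule card_image_le) (simp add: finite_pderiv_space)
  also have "\<dots> \<le> 2 ^ rsize r"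
    by (simp add: card_Pow finite_pderiv_space card_pderiv_space_le power_increasing)
  finally show ?thesis .
qed

lemma nact_cong:
  "\<forall>(r, \<alpha>)\<in>set rs. consistent sat r h1 \<longleftrightarrow> consistent sat r h2 \<Longrightarrow>
    nact sat rs h1 = nact sat rs h2"
  by (induction rs) auto

section \<open>Lasso paths\<close>

(* lasso i j n runs through 0, ..., j - 1 and then cycles through i, ..., j - 1 forever. *)
primrec lasso :: "nat \<Rightarrow> nat \<Rightarrow> nat \<Rightarrow> nat" where
  "lasso i j 0 = 0"
| "lasso i j (Suc n) = (if Suc (lasso i j n) = j then i else Suc (lasso i j n))"

lemma lasso_less: "i < j \<Longrightarrow> lasso i j n < j"
  by (induction n) auto

lemma lasso_Suc_cong: "v i = v j \<Longrightarrow> v (lasso i j (Suc n)) = v (Suc (lasso i j n))"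
  by simp

lemma lasso_recurrence:
  assumes "v i = v j"
    and "\<And>m. v (Suc m) = g m (v m)"
    and "w 0 = v 0"
    and "\<And>n. w (Suc n) = g (lasso i j n) (w n)"
  shows "w n = v (lasso i j n)"
proof (induction n)
  case 0
  then show ?case using assms(3) by simp
next
  case (Suc n)
  have "w (Suc n) = v (Suc (lasso i j n))"
    using Suc assms(2,4) by simp
  also have "\<dots> = v (lasso i j (Suc n))"
    using lasso_Suc_cong[of v, OF assms(1)] by simp
  finally show ?case .
qed

lemma lquot_prefix_lasso:
  assumes "\<pi> i = \<pi> j"
    and "lquot L (map \<pi> [0..<Suc i]) = lquot L (map \<pi> [0..<Suc j])"
  shows "lquot L (map (\<pi> \<circ> lasso i j) [0..<Suc n]) = lquot L (map \<pi> [0..<Suc (lasso i j n)])"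
proof (rule lasso_recurrence[where v = "\<lambda>m. lquot L (map \<pi> [0..<Suc m])"])
  show "lquot L (map \<pi> [0..<Suc (Suc m)]) = {g. \<pi> (Suc m) # g \<in> lquot L (map \<pi> [0..<Suc m])}"
    for m by (auto simp: in_lquot_snoc_iff[symmetric])
  show "lquot L (map (\<pi> \<circ> lasso i j) [0..<Suc (Suc n)]) =
      {g. \<pi> (Suc (lasso i j n)) # g \<in> lquot L (map (\<pi> \<circ> lasso i j) [0..<Suc n])}" for n
    using lasso_Suc_cong[of \<pi>, OF assms(1)] by (auto simp: in_lquot_snoc_iff[symmetric])
qed (use assms(2) in simp_all)

lemma sum_lasso:
  assumes "(\<Sum>m<i. f m) = (\<Sum>m<j. f m)"
  shows "(\<Sum>m<n. f (lasso i j m)) = (\<Sum>m<lasso i j n. f m)"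
  by (rule lasso_recurrence[where v = "\<lambda>n. \<Sum>m<n. f m"]) (simp_all add: assms)

section \<open>Pumping outcomes of natural strategies\<close>

lemma pigeonhole_atMost:
  assumes "f ` {..n} \<subseteq> C" and "finite C" and "card C \<le> n"
  obtains i j where "i < j" and "j \<le> n" and "f i = f j"
proof -
  have "card (f ` {..n}) < card {..n}"
    using card_mono[OF assms(2,1)] assms(3) by simp
  then have "\<not> inj_on f {..n}"
    using pigeonhole by blast
  then obtain i j where "i \<le> n" "j \<le> n" "i \<noteq> j" "f i = f j"
    unfolding inj_on_def by auto
  then show ?thesis
    using that[of i j] that[of j i] by (cases "i < j") auto
qed

lemma outcome_in_St:
  assumes "is_rfcgs M" and "st \<in> St M" and "outcome M sat A sA st \<pi> c"
  shows "\<pi> n \<in> St M"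
proof (induction n)
  case 0
  then show ?case using assms(2,3) by (simp add: outcome_def)
next
  case (Suc n)
  then show ?case using assms(1,3) unfolding outcome_def is_rfcgs_def by metis
qed

lemma outcome_consumption_le:
  assumes "outcome M sat A sA st \<pi> c" and "a \<in> A"
  shows "(\<Sum>m<n. consume M a (c m a)) \<le> res M a"
proof (cases n)
  case (Suc i)
  then show ?thesis
    using assms unfolding outcome_def by (simp add: lessThan_Suc_atMost)
qed simp

definition guards :: "'ag set \<Rightarrow> ('ag \<Rightarrow> ('ap, 'act) nstrat) \<Rightarrow> 'ap pform regex set" where
  "guards A sA = (\<Union>a\<in>A. fst ` set (sA a))"

lemma guardsI: "a \<in> A \<Longrightarrow> (r, \<alpha>) \<in> set (sA a) \<Longrightarrow> r \<in> guards A sA"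
  unfolding guards_def by force

lemma sum_rsize_fst_set_le_compl: "(\<Sum>r\<in>fst ` set rs. rsize r) \<le> compl rs"
  by (induction rs) (auto simp: compl_def sum.insert_if)

lemma sum_rsize_guards_le:
  assumes "finite A"
  shows "(\<Sum>r\<in>guards A sA. rsize r) \<le> coal_compl A sA"
proof -
  have "guards A sA = snd ` (SIGMA a:A. fst ` set (sA a))"
    unfolding guards_def by force
  then have "(\<Sum>r\<in>guards A sA. rsize r) \<le> (\<Sum>(a, r)\<in>(SIGMA a:A. fst ` set (sA a)). rsize r)"
    using assms by (auto intro: order_trans[OF sum_image_le] simp: case_prod_beta')
  also have "\<dots> = (\<Sum>a\<in>A. \<Sum>r\<in>fst ` set (sA a). rsize r)"
    using assms by (simp add: sum.Sigma)
  also have "\<dots> \<le> coal_compl A sA"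
    unfolding coal_compl_def by (intro sum_mono sum_rsize_fst_set_le_compl)
  finally show ?thesis .
qed

definition config ::
  "('ag, 'ap, 'act, 's) rfcgs \<Rightarrow> ('s \<Rightarrow> 'ap pform \<Rightarrow> bool) \<Rightarrow> 'ag set \<Rightarrow> ('ag \<Rightarrow> ('ap, 'act) nstrat)
     \<Rightarrow> (nat \<Rightarrow> 's) \<Rightarrow> (nat \<Rightarrow> 'ag \<Rightarrow> 'act) \<Rightarrow> nat
     \<Rightarrow> 's \<times> ('ap pform regex \<Rightarrow> 's list set) \<times> ('ag \<Rightarrow> nat)" where
  "config M sat A sA \<pi> c n =
     (\<pi> n,
      \<lambda>r\<in>guards A sA. lquot (hist_lang sat r) (map \<pi> [0..<Suc n]),
      \<lambda>a\<in>A. \<Sum>m<n. consume M a (c m a))"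

lemma config_range_bounded:
  assumes "is_rfcgs M" and "A \<subseteq> Agt M" and "st \<in> St M" and out: "outcome M sat A sA st \<pi> c"
  obtains C where "finite C"
    and "card C \<le> card (St M) * 2 ^ coal_compl A sA * (\<Prod>a\<in>A. res M a + 1)"
    and "range (config M sat A sA \<pi> c) \<subseteq> C"
proof -
  have finA: "finite A"
    using assms(1,2) unfolding is_rfcgs_def by (meson finite_subset)
  have finSt: "finite (St M)"
    using assms(1) unfolding is_rfcgs_def by blast
  have finG: "finite (guards A sA)"
    using finA unfolding guards_def by blast
  define Q where "Q = (\<Pi>\<^sub>E r\<in>guards A sA. {lquot (hist_lang sat r) h | h. h \<noteq> []})"
  define U where "U = (\<Pi>\<^sub>E a\<in>A. {..res M a})"
  have "range (config M sat A sA \<pi> c) \<subseteq> St M \<times> Q \<times> U"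
    using outcome_in_St[OF assms(1,3) out] outcome_consumption_le[OF out]
    by (force simp: config_def Q_def U_def)
  moreover have "finite (St M \<times> Q \<times> U)"
    using finSt finG finA finite_lquots_hist_lang
    unfolding Q_def U_def by (intro finite_cartesian_product finite_PiE) auto
  moreover have "card (St M \<times> Q \<times> U) \<le> card (St M) * 2 ^ coal_compl A sA * (\<Prod>a\<in>A. res M a + 1)"
  proof -
    have "card Q \<le> (\<Prod>r\<in>guards A sA. 2 ^ rsize r)"
      unfolding Q_def card_PiE[OF finG]
      by (intro prod_mono) (simp add: card_lquots_hist_lang_le)
    also have "\<dots> = 2 ^ (\<Sum>r\<in>guards A sA. rsize r)"
      by (simp add: power_sum)
    also have "\<dots> \<le> 2 ^ coal_compl A sA"
      using sum_rsize_guards_le[OF finA] by (simp add: power_increasing)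
    finally have "card Q \<le> 2 ^ coal_compl A sA" .
    moreover have "card U = (\<Prod>a\<in>A. res M a + 1)"
      unfolding U_def by (simp add: card_PiE finA)
    ultimately show ?thesis
      by (simp add: card_cartesian_product mult.assoc mult_le_mono)
  qed
  ultimately show ?thesis using that by blast
qed

lemma outcome_lasso:
  assumes out: "outcome M sat A sA st \<pi> c" and "i < j"
    and conf: "config M sat A sA \<pi> c i = config M sat A sA \<pi> c j"
  shows "outcome M sat A sA st (\<pi> \<circ> lasso i j) (c \<circ> lasso i j)"
proof -
  let ?quots = "\<lambda>n. \<lambda>r\<in>guards A sA. lquot (hist_lang sat r) (map \<pi> [0..<Suc n])"
  let ?consumed = "\<lambda>n. \<lambda>a\<in>A. \<Sum>m<n. consume M a (c m a)"
  have state: "\<pi> i = \<pi> j" and quots: "?quots i = ?quots j" and consumed: "?consumed i = ?consumed j"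
    using conf unfolding config_def prod.inject by blast+
  have lquot: "lquot (hist_lang sat r) (map \<pi> [0..<Suc i]) = lquot (hist_lang sat r) (map \<pi> [0..<Suc j])"
    if "r \<in> guards A sA" for r
    using fun_cong[OF quots, of r] that by (simp only: restrict_apply')
  have consumption: "(\<Sum>m<i. consume M a (c m a)) = (\<Sum>m<j. consume M a (c m a))" if "a \<in> A" for a
    using fun_cong[OF consumed, of a] that by (simp only: restrict_apply')
  have consistent_lasso: "consistent sat r (map (\<pi> \<circ> lasso i j) [0..<Suc n]) \<longleftrightarrow>
      consistent sat r (map \<pi> [0..<Suc (lasso i j n)])" if "r \<in> guards A sA" for r n
    using lquot_prefix_lasso[OF state lquot[OF that], of n]
    by (metis consistent_iff_in_hist_lang Nil_in_lquot_iff)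
  show ?thesis
    unfolding outcome_def
  proof (intro conjI allI ballI)
    show "(\<pi> \<circ> lasso i j) 0 = st"
      using out by (simp add: outcome_def)
  next
    fix n
    show "joint_avail M ((\<pi> \<circ> lasso i j) n) ((c \<circ> lasso i j) n)"
      using out by (simp add: outcome_def)
    show "(\<pi> \<circ> lasso i j) (Suc n) = trans M ((\<pi> \<circ> lasso i j) n) ((c \<circ> lasso i j) n)"
      using out lasso_Suc_cong[of \<pi>, OF state, of n] by (simp add: outcome_def del: lasso.simps)
  next
    fix n a
    assume "a \<in> A"
    then have "nact sat (sA a) (map (\<pi> \<circ> lasso i j) [0..<Suc n]) =
        nact sat (sA a) (map \<pi> [0..<Suc (lasso i j n)])"
      by (intro nact_cong) (auto simp: consistent_lasso[OF guardsI] simp del: upt_Suc)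
    then show "nact sat (sA a) (map (\<pi> \<circ> lasso i j) [0..<Suc n]) = Some ((c \<circ> lasso i j) n a)"
      using out \<open>a \<in> A\<close> by (simp add: outcome_def)
    have "(\<Sum>m\<le>n. consume M a ((c \<circ> lasso i j) m a)) = (\<Sum>m<lasso i j (Suc n). consume M a (c m a))"
      using sum_lasso[OF consumption[OF \<open>a \<in> A\<close>], of "Suc n"] by (simp add: lessThan_Suc_atMost)
    then show "(\<Sum>m\<le>n. consume M a ((c \<circ> lasso i j) m a)) \<le> res M a"
      using outcome_consumption_le[OF out \<open>a \<in> A\<close>] by simp
  qed
qed

lemma outcome_lasso_in_prefix:
  assumes "is_rfcgs M" and "A \<subseteq> Agt M" and "st \<in> St M" and out: "outcome M sat A sA st \<pi> c"
  obtains \<pi>' c' where "outcome M sat A sA st \<pi>' c'"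
    and "range \<pi>' \<subseteq> \<pi> ` {..<card (St M) * 2 ^ coal_compl A sA * (\<Prod>a\<in>A. res M a + 1)}"
proof -
  let ?L = "card (St M) * 2 ^ coal_compl A sA * (\<Prod>a\<in>A. res M a + 1)"
  obtain C where C: "finite C" "card C \<le> ?L" "range (config M sat A sA \<pi> c) \<subseteq> C"
    using config_range_bounded[OF assms] .
  then have "config M sat A sA \<pi> c ` {..?L} \<subseteq> C"
    by blast
  then obtain i j where ij: "i < j" "j \<le> ?L" "config M sat A sA \<pi> c i = config M sat A sA \<pi> c j"
    using pigeonhole_atMost C(1,2) by blast
  have "outcome M sat A sA st (\<pi> \<circ> lasso i j) (c \<circ> lasso i j)"
    using outcome_lasso[OF out ij(1,3)] .
  moreover have "lasso i j n < ?L" for n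
    using lasso_less[OF ij(1), of n] ij(2) by linarith
  then have "range (\<pi> \<circ> lasso i j) \<subseteq> \<pi> ` {..<?L}"
    by auto
  ultimately show ?thesis using that by blast
qed

lemma until_path_not_within_Psi:
  assumes "until_path Phi Psi \<pi>" and "\<not> until_within L Phi Psi \<pi>" and "m \<le> L"
  shows "\<pi> m \<notin> Psi"
proof
  assume "\<pi> m \<in> Psi"
  obtain i where "\<pi> i \<in> Psi" "\<forall>j<i. \<pi> j \<in> Phi"
    using assms(1) unfolding until_path_def by blast
  then have "\<pi> (min i m) \<in> Psi" "\<forall>j<min i m. \<pi> j \<in> Phi" "min i m \<le> L"
    using \<open>\<pi> m \<in> Psi\<close> assms(3) by (auto simp: min_def)
  then show False
    using assms(2) unfolding until_within_def by blast
qed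

lemma enforces_until_imp_depth:
  assumes "is_rfcgs M" and "A \<subseteq> Agt M" and "st \<in> St M"
    and enf: "enforces_until M sat A sA st Phi Psi"
  shows "enforces_until_depth (card (St M) * 2 ^ coal_compl A sA * (\<Prod>a\<in>A. res M a + 1))
    M sat A sA st Phi Psi"
  unfolding enforces_until_depth_def
proof (intro allI impI)
  let ?L = "card (St M) * 2 ^ coal_compl A sA * (\<Prod>a\<in>A. res M a + 1)"
  fix \<pi> c
  assume out: "outcome M sat A sA st \<pi> c"
  show "until_within ?L Phi Psi \<pi>"
  proof (rule ccontr)
    assume not_within: "\<not> until_within ?L Phi Psi \<pi>"
    obtain \<pi>' c' where out': "outcome M sat A sA st \<pi>' c'" and prefix_states: "range \<pi>' \<subseteq> \<pi> ` {..<?L}"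
      using outcome_lasso_in_prefix[OF assms(1-3) out] .
    have "until_path Phi Psi \<pi>"
      using enf out unfolding enforces_until_def by blast
    then have no_Psi: "\<pi> m \<notin> Psi" if "m < ?L" for m
      using until_path_not_within_Psi[OF _ not_within] that by simp
    have "until_path Phi Psi \<pi>'"
      using enf out' unfolding enforces_until_def by blast
    then obtain n where "\<pi>' n \<in> Psi"
      unfolding until_path_def by blast
    moreover obtain m where "m < ?L" "\<pi>' n = \<pi> m"
      using prefix_states by blast
    ultimately show False
      using no_Psi by simp
  qed
qed

lemma enforces_until_depth_mono:
  assumes "enforces_until_depth L M sat A sA st Phi Psi" and "L \<le> L'"
  shows "enforces_until_depth L' M sat A sA st Phi Psi"
  using assms unfolding enforces_until_depth_def until_within_def by (blast intro: le_trans)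

lemma enforces_until_depth_imp_enforces_until:
  "enforces_until_depth L M sat A sA st Phi Psi \<Longrightarrow> enforces_until M sat A sA st Phi Psi"
  unfolding enforces_until_depth_def enforces_until_def until_within_def until_path_def by blast

theorem proposition2:
  fixes M :: "('ag, 'ap, 'act, 's) rfcgs"
    and sat :: "'s \<Rightarrow> 'ap pform \<Rightarrow> bool"
    and A :: "'ag set"
    and sA :: "'ag \<Rightarrow> ('ap, 'act) nstrat"
    and st :: 's and Phi Psi :: "'s set"
  assumes "is_rfcgs M"
    and "A \<subseteq> Agt M"
    and "\<forall>a\<in>A. is_nstrat M sat a (sA a)"
    and "st \<in> St M"
    and "k = coal_compl A sA"
    and "L = card (St M) * 2 ^ (2 * k ^ 2) * (\<Prod>a\<in>A. res M a + 1)"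
  shows "enforces_until M sat A sA st Phi Psi \<longleftrightarrow> enforces_until_depth L M sat A sA st Phi Psi"
proof
  assume "enforces_until M sat A sA st Phi Psi"
  then have "enforces_until_depth (card (St M) * 2 ^ k * (\<Prod>a\<in>A. res M a + 1)) M sat A sA st Phi Psi"
    unfolding assms(5) by (rule enforces_until_imp_depth[OF assms(1,2,4)])
  moreover have "card (St M) * 2 ^ k * (\<Prod>a\<in>A. res M a + 1) \<le> L"
  proof -
    have "(2::nat) ^ k \<le> 2 ^ (2 * k ^ 2)"
      by (rule power_increasing) (auto simp: power2_eq_square)
    then show ?thesis
      unfolding assms(6) by (intro mult_le_mono order.refl)
  qed
  ultimately show "enforces_until_depth L M sat A sA st Phi Psi"
    by (rule enforces_until_depth_mono)
qed (rule enforces_until_depth_imp_enforces_until)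

end
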